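(* Let $X$ be a finite alphabet and let $w \in \overline{X}^*$ be a word representing the identity in the free group $F(X)$. Then the following are equivalent: (i) $w$ represents the identity in the polycyclic monoid $P(X)$; (ii) every prefix of $w$ represents a positive element or the identity of $F(X)$; (iii) the only minimum of $w$ is the identity of $F(X)$.
   Context: $\overline{X} = \{x, x^{-1} : x \in X\}$; letters of $X$ are positive generators and letters $x^{-1}$ negative generators. $F(X)$ is the free group with presentation $\langle \overline{X} \mid xx^{-1} = x^{-1}x = 1 \ (x \in X)\rangle$. The polycyclic monoid $P(X)$ is the monoid of partial functions on $X^*$ (composed left to right: $fg$ means apply $f$ then $g$) generated by $x: u \mapsto ux$ (defined everywhere) and $x^{-1}: ux \mapsto u$ (defined on $X^*x$), $x \in X$; a word over $\overline{X}$ represents the identity of $P(X)$ exactly when it can be reduced to the empty word by successively deleting factors $xx^{-1}$ with $x \in X$. An element of $F(X)$ is positive if it is a product of one or more positive generators. For $w \in \overline{X}^*$ and $g \in F(X)$, $g$ is a minimum of $w$ if (a) some prefix of $w$ represents $g$, and (b) no prefix of $w$ representing $g$ is immediately followed (in $w$) by a negative generator. *)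

theory Defs
  imports Main
begin

text \<open>Letters of the doubled alphabet: (x, True) is the positive generator x,
  (x, False) is the negative generator x^{-1}.\<close>
type_synonym 'a letter = "'a \<times> bool"

definition letter_inv :: "'a letter \<Rightarrow> 'a letter" where
  "letter_inv l = (fst l, \<not> snd l)"

definition words :: "'a set \<Rightarrow> 'a letter list set" where
  "words X = lists (X \<times> UNIV)"

definition cancel_step :: "'a letter list \<Rightarrow> 'a letter list \<Rightarrow> bool" where
  "cancel_step u v \<longleftrightarrow> (\<exists>p q a. u = p @ [a, letter_inv a] @ q \<and> v = p @ q)"

definition fg_eq :: "'a letter list \<Rightarrow> 'a letter list \<Rightarrow> bool" where
  "fg_eq = (symclp cancel_step)\<^sup>*\<^sup>*"

definition fg_positive :: "'a set \<Rightarrow> 'a letter list \<Rightarrow> bool" where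
  "fg_positive X g \<longleftrightarrow> (\<exists>v. v \<noteq> [] \<and> set v \<subseteq> X \<times> {True} \<and> fg_eq g v)"

text \<open>Polycyclic monoid P(X): partial functions on X*, composed left to right.\<close>
fun pc_letter :: "'a letter \<Rightarrow> 'a list \<Rightarrow> 'a list option" where
  "pc_letter (x, True) u = Some (u @ [x])"
| "pc_letter (x, False) u =
     (if u \<noteq> [] \<and> last u = x then Some (butlast u) else None)"

fun pc_eval :: "'a letter list \<Rightarrow> 'a list \<Rightarrow> 'a list option" where
  "pc_eval [] u = Some u"
| "pc_eval (l # w) u = Option.bind (pc_letter l u) (pc_eval w)"

definition pc_is_identity :: "'a set \<Rightarrow> 'a letter list \<Rightarrow> bool" where
  "pc_is_identity X w \<longleftrightarrow> (\<forall>u \<in> lists X. pc_eval w u = Some u)"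

definition is_minimum :: "'a letter list \<Rightarrow> 'a letter list \<Rightarrow> bool" where
  "is_minimum w g \<longleftrightarrow>
     (\<exists>p s. w = p @ s \<and> fg_eq p g) \<and>
     (\<forall>p s. w = p @ s \<and> fg_eq p g \<longrightarrow> \<not> (s \<noteq> [] \<and> snd (hd s) = False))"

end

(* Reading a word from left to right and cancelling each letter against the top of a stack
   computes its free reduction, so two words are equal in F(X) iff they leave the same stack.
   As long as the stack holds only positive letters, P(X) acts on u by appending the letters
   of the stack, and a negative letter applied to such a stack is defined exactly when it
   cancels the top; hence (i) and (ii) both say that the stack stays positive throughout w.
   For (iii): under (ii) a nontrivial value reached by a prefix is positive, and as the stack
   must empty again, this value is eventually left through a negative letter, so it is not a
   minimum; 1 is one, since a negative letter read at value 1 gives a negative prefix.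
   Conversely, if some prefix reduces to a word ending in a negative letter, a prefix with
   the longest such reduced word is a nontrivial minimum. *)

theory Submission
  imports Defs
begin

subsection \<open>Free reduction by a stack\<close>

definition push :: "'a letter \<Rightarrow> 'a letter list \<Rightarrow> 'a letter list" where
  "push l t = (case t of
     [] \<Rightarrow> [l]
   | m # t' \<Rightarrow> if m = letter_inv l then t' else l # m # t')"

text \<open>The free reduction of w, stored last letter first.\<close>
definition stack :: "'a letter list \<Rightarrow> 'a letter list" where
  "stack w = fold push w []"

lemma stack_Nil [simp]: "stack [] = []"
  by (simp add: stack_def)

lemma stack_snoc [simp]: "stack (p @ [l]) = push l (stack p)"
  by (simp add: stack_def)

lemma stack_append: "stack (p @ q) = fold push q (stack p)"
  by (simp add: stack_def)

lemma letter_inv_letter_inv [simp]: "letter_inv (letter_inv a) = a"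
  by (simp add: letter_inv_def)

lemma letter_inv_eq_swap: "b = letter_inv a \<longleftrightarrow> a = letter_inv b"
  by auto

fun freely_reduced :: "'a letter list \<Rightarrow> bool" where
  "freely_reduced (a # b # t) \<longleftrightarrow> b \<noteq> letter_inv a \<and> freely_reduced (b # t)"
| "freely_reduced _ \<longleftrightarrow> True"

lemma freely_reduced_push: "freely_reduced t \<Longrightarrow> freely_reduced (push l t)"
  by (cases t rule: freely_reduced.cases) (auto simp: push_def letter_inv_eq_swap)

lemma freely_reduced_fold_push: "freely_reduced t \<Longrightarrow> freely_reduced (fold push w t)"
  by (induction w arbitrary: t) (auto simp: freely_reduced_push)

lemma freely_reduced_stack: "freely_reduced (stack w)"
  by (simp add: stack_def freely_reduced_fold_push)

lemma push_letter_inv_push: "freely_reduced t \<Longrightarrow> push (letter_inv l) (push l t) = t"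
  by (cases t rule: freely_reduced.cases) (auto simp: push_def letter_inv_eq_swap)

lemma set_push: "set (push l t) \<subseteq> insert l (set t)"
  by (auto simp: push_def split: list.splits)

lemma set_fold_push: "set (fold push w t) \<subseteq> set w \<union> set t"
proof (induction w arbitrary: t)
  case (Cons a w)
  then show ?case
    using set_push[of a t] by fastforce
qed simp

lemma set_stack: "set (stack w) \<subseteq> set w"
  using set_fold_push[of w "[]"] by (simp add: stack_def)

lemma length_push: "length (push l t) \<le> Suc (length t)"
  by (auto simp: push_def split: list.splits)

lemma length_fold_push: "length (fold push w t) \<le> length w + length t"
proof (induction w arbitrary: t)
  case (Cons a w)
  have "length (fold push w (push a t)) \<le> length w + length (push a t)"
    by (rule Cons.IH)
  then show ?case
    using length_push[of a t] by simp
qed simp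

lemma length_stack: "length (stack w) \<le> length w"
  using length_fold_push[of w "[]"] by (simp add: stack_def)

lemma fg_eq_eq_equivclp: "fg_eq = equivclp cancel_step"
  by (simp add: fg_eq_def equivclp_def)

lemma stack_eq_if_cancel_step: "cancel_step u v \<Longrightarrow> stack u = stack v"
  unfolding cancel_step_def
  by (auto simp: stack_append push_letter_inv_push freely_reduced_stack)

lemma stack_eq_if_fg_eq: "fg_eq u v \<Longrightarrow> stack u = stack v"
  unfolding fg_eq_eq_equivclp
  by (induction rule: equivclp_induct) (auto dest: stack_eq_if_cancel_step)

lemma fg_eq_append_right: "fg_eq u v \<Longrightarrow> fg_eq (u @ x) (v @ x)"
  unfolding fg_eq_eq_equivclp
proof (induction rule: equivclp_induct)
  case (step y z)
  have "cancel_step (y @ x) (z @ x) \<or> cancel_step (z @ x) (y @ x)"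
    using step.hyps(2) unfolding cancel_step_def by fastforce
  then show ?case
    using step.IH by (meson equivclp_into_equivclp)
qed simp

lemma fg_eq_rev_stack: "fg_eq w (rev (stack w))"
proof (induction w rule: rev_induct)
  case Nil
  then show ?case by (simp add: fg_eq_def)
next
  case (snoc l p)
  have prefix: "fg_eq (p @ [l]) (rev (stack p) @ [l])"
    using fg_eq_append_right[OF snoc] .
  show ?case
  proof (cases "stack p")
    case (Cons m t)
    show ?thesis
    proof (cases "m = letter_inv l")
      case True
      have "cancel_step (rev t @ [m, letter_inv m] @ []) (rev t @ [])"
        unfolding cancel_step_def by blast
      then have "fg_eq (rev (stack p) @ [l]) (rev t)"
        using Cons True by (simp add: fg_eq_eq_equivclp r_into_equivclp)
      with prefix show ?thesis
        using Cons True by (simp add: push_def fg_eq_eq_equivclp) (meson equivclp_trans)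
    qed (use prefix Cons in \<open>simp add: push_def\<close>)
  qed (use prefix in \<open>simp add: push_def\<close>)
qed

lemma fg_eq_iff_stack_eq: "fg_eq u v \<longleftrightarrow> stack u = stack v"
proof
  assume "stack u = stack v"
  then show "fg_eq u v"
    using fg_eq_rev_stack[of u] fg_eq_rev_stack[of v] unfolding fg_eq_eq_equivclp
    by (metis equivclp_sym equivclp_trans)
qed (rule stack_eq_if_fg_eq)

definition all_positive :: "'a letter list \<Rightarrow> bool" where
  "all_positive t \<longleftrightarrow> (\<forall>l \<in> set t. snd l)"

definition positive_prefixes :: "'a letter list \<Rightarrow> bool" where
  "positive_prefixes w \<longleftrightarrow> (\<forall>p s. w = p @ s \<longrightarrow> all_positive (stack p))"

lemma positive_prefixes_Nil [simp]: "positive_prefixes []"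
  by (simp add: positive_prefixes_def all_positive_def)

lemma positive_prefixes_snoc:
  "positive_prefixes (p @ [l]) \<longleftrightarrow> positive_prefixes p \<and> all_positive (push l (stack p))"
proof -
  have "(\<exists>s. p @ [l] = q @ s) \<longleftrightarrow> (\<exists>s. p = q @ s) \<or> q = p @ [l]" for q
    by (metis append.right_neutral append_assoc butlast_append butlast_snoc rev_exhaust)
  then show ?thesis
    unfolding positive_prefixes_def by auto
qed

lemma all_positive_stack_if_positive_prefixes:
  "positive_prefixes w \<Longrightarrow> all_positive (stack w)"
  by (simp add: positive_prefixes_def)

lemma stack_eq_rev_if_all_positive: "all_positive v \<Longrightarrow> stack v = rev v"
proof (induction v rule: rev_induct)
  case (snoc l v)
  then have "stack v = rev v" "snd l" "\<forall>m \<in> set (rev v). snd m"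
    by (auto simp: all_positive_def)
  moreover from this(2,3) have "push l (rev v) = l # rev v"
    by (cases "rev v") (auto simp: push_def letter_inv_def)
  ultimately show ?case
    by simp
qed simp

lemma fg_positive_or_trivial_iff:
  assumes "w \<in> words X"
  shows "fg_positive X w \<or> fg_eq w [] \<longleftrightarrow> all_positive (stack w)"
proof
  assume "fg_positive X w \<or> fg_eq w []"
  then show "all_positive (stack w)"
  proof
    assume "fg_positive X w"
    then obtain v where "set v \<subseteq> X \<times> {True}" "fg_eq w v"
      unfolding fg_positive_def by blast
    moreover from this(1) have "all_positive v"
      by (auto simp: all_positive_def)
    ultimately show ?thesis
      using stack_eq_rev_if_all_positive[of v] by (simp add: fg_eq_iff_stack_eq all_positive_def)
  qed (simp add: fg_eq_iff_stack_eq all_positive_def)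
next
  assume positive: "all_positive (stack w)"
  have "set (stack w) \<subseteq> X \<times> UNIV"
    using set_stack[of w] assms by (auto simp: words_def)
  with positive have "set (rev (stack w)) \<subseteq> X \<times> {True}"
    by (auto simp: all_positive_def)
  then have "stack w \<noteq> [] \<Longrightarrow> fg_positive X w"
    unfolding fg_positive_def using fg_eq_rev_stack[of w]
    by (intro exI[of _ "rev (stack w)"]) simp
  then show "fg_positive X w \<or> fg_eq w []"
    by (auto simp: fg_eq_iff_stack_eq)
qed

lemma positive_prefixes_iff:
  assumes "w \<in> words X"
  shows "positive_prefixes w \<longleftrightarrow> (\<forall>p s. w = p @ s \<longrightarrow> fg_positive X p \<or> fg_eq p [])"
proof -
  have "p \<in> words X" if "w = p @ s" for p s
    using assms that by (simp add: words_def)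
  then show ?thesis
    unfolding positive_prefixes_def using fg_positive_or_trivial_iff by blast
qed

subsection \<open>The action of P(X)\<close>

lemma pc_eval_append: "pc_eval (p @ q) u = Option.bind (pc_eval p u) (pc_eval q)"
  by (induction p arbitrary: u) (auto intro: Option.bind_cong simp: Option.bind_assoc)

lemma pc_letter_after_positive_stack:
  assumes "all_positive t" and "all_positive (push l t)"
  shows "pc_letter l (u @ map fst (rev t)) = Some (u @ map fst (rev (push l t)))"
proof (cases t)
  case Nil
  then show ?thesis
    using assms(2) by (cases l) (auto simp: push_def all_positive_def)
next
  case (Cons m t')
  then show ?thesis
    using assms by (cases l; cases m)
      (auto simp: push_def all_positive_def letter_inv_def butlast_append split: if_splits)
qed

lemma pc_letter_undefined_after_positive_stack:
  assumes "all_positive t" and "\<not> all_positive (push l t)"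
  shows "pc_letter l (map fst (rev t)) = None"
proof (cases t)
  case Nil
  then show ?thesis
    using assms(2) by (cases l) (auto simp: push_def all_positive_def)
next
  case (Cons m t')
  then show ?thesis
    using assms by (cases l; cases m)
      (auto simp: push_def all_positive_def letter_inv_def split: if_splits elim: pc_letter.elims)
qed

lemma pc_eval_if_positive_prefixes:
  "positive_prefixes w \<Longrightarrow> pc_eval w u = Some (u @ map fst (rev (stack w)))"
proof (induction w rule: rev_induct)
  case (snoc l p)
  then have "positive_prefixes p" "all_positive (push l (stack p))"
    by (simp_all add: positive_prefixes_snoc)
  with snoc.IH show ?case
    by (simp add: pc_eval_append pc_letter_after_positive_stack
        all_positive_stack_if_positive_prefixes)
qed simp

lemma positive_prefixes_if_pc_eval_defined: "pc_eval w [] \<noteq> None \<Longrightarrow> positive_prefixes w"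
proof (induction w rule: rev_induct)
  case (snoc l p)
  then have "pc_eval p [] \<noteq> None"
    by (cases "pc_eval p []") (auto simp: pc_eval_append)
  with snoc.IH have p: "positive_prefixes p" .
  then have "pc_letter l (map fst (rev (stack p))) \<noteq> None"
    using snoc.prems by (cases "pc_letter l (map fst (rev (stack p)))")
      (simp_all add: pc_eval_append pc_eval_if_positive_prefixes)
  with p have "all_positive (push l (stack p))"
    using pc_letter_undefined_after_positive_stack all_positive_stack_if_positive_prefixes
    by metis
  with p show ?case
    by (simp add: positive_prefixes_snoc)
qed simp

lemma pc_is_identity_iff_positive_prefixes:
  assumes "stack w = []"
  shows "pc_is_identity X w \<longleftrightarrow> positive_prefixes w"
proof
  assume "pc_is_identity X w"
  then show "positive_prefixes w"
    by (simp add: pc_is_identity_def positive_prefixes_if_pc_eval_defined)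
next
  assume "positive_prefixes w"
  then show "pc_is_identity X w"
    using assms by (simp add: pc_is_identity_def pc_eval_if_positive_prefixes)
qed

subsection \<open>Minima\<close>

lemma is_minimum_iff_stack:
  "is_minimum w g \<longleftrightarrow>
     (\<exists>p s. w = p @ s \<and> stack p = stack g) \<and>
     (\<forall>p l s. w = p @ l # s \<and> stack p = stack g \<longrightarrow> snd l)"
  unfolding is_minimum_def fg_eq_iff_stack_eq
  by (metis list.distinct(1) list.exhaust list.sel(1))

lemma stack_returns_to_suffix:
  "stack p = t @ r \<Longrightarrow> stack (p @ s) = [] \<Longrightarrow> \<exists>s1 s2. s = s1 @ s2 \<and> stack (p @ s1) = r"
proof (induction s arbitrary: p t)
  case Nil
  then show ?case by simp
next
  case (Cons l s)
  show ?case
  proof (cases t)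
    case Nil
    with Cons.prems show ?thesis
      by (intro exI[of _ "[]"] exI[of _ "l # s"]) simp
  next
    case (Cons m t')
    obtain t2 where "stack (p @ [l]) = t2 @ r"
      using Cons \<open>stack p = t @ r\<close> by (cases "m = letter_inv l") (auto simp: push_def)
    moreover have "stack ((p @ [l]) @ s) = []"
      using \<open>stack (p @ l # s) = []\<close> by simp
    ultimately obtain s1 s2 where "s = s1 @ s2" "stack ((p @ [l]) @ s1) = r"
      using Cons.IH by blast
    then show ?thesis
      by (intro exI[of _ "l # s1"] exI[of _ s2]) simp
  qed
qed

lemma positive_value_left_by_negative_letter:
  assumes "w = p @ s" and "stack p = r" and "r \<noteq> []" and "all_positive r"
    and "stack w = []"
  shows "\<exists>p' l s'. w = p' @ l # s' \<and> stack p' = r \<and> \<not> snd l"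
  using assms(1,2)
proof (induction "length s" arbitrary: p s rule: less_induct)
  case less
  from less.prems assms(3,5) obtain l s0 where s: "s = l # s0"
    by (cases s) auto
  show ?case
  proof (cases "snd l")
    case False
    with less.prems s show ?thesis by blast
  next
    case True
    with assms(4) have "stack (p @ [l]) = [l] @ r"
      using \<open>stack p = r\<close> by (cases r) (auto simp: push_def all_positive_def letter_inv_def)
    moreover have "stack ((p @ [l]) @ s0) = []"
      using less.prems s assms(5) by simp
    ultimately obtain s1 s2 where s12: "s0 = s1 @ s2" "stack ((p @ [l]) @ s1) = r"
      using stack_returns_to_suffix by blast
    have "w = (p @ [l] @ s1) @ s2"
      using less.prems s s12 by simp
    moreover have "length s2 < length s"
      using s s12 by simp
    ultimately show ?thesis
      using less.hyps[of s2 "p @ [l] @ s1"] s12 by simp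
  qed
qed

lemma is_minimum_iff_trivial_if_positive_prefixes:
  assumes "positive_prefixes w" and "stack w = []"
  shows "is_minimum w g \<longleftrightarrow> stack g = []"
proof
  assume minimum: "is_minimum w g"
  then obtain p s where "w = p @ s" "stack p = stack g"
    unfolding is_minimum_iff_stack by blast
  moreover from this(1) assms(1) have "all_positive (stack p)"
    by (simp add: positive_prefixes_def)
  ultimately show "stack g = []"
    using minimum positive_value_left_by_negative_letter[OF _ _ _ _ assms(2)]
    unfolding is_minimum_iff_stack by metis
next
  assume "stack g = []"
  moreover have "snd l" if "w = p @ l # s" "stack p = []" for p l s
  proof -
    from that(1) have "w = (p @ [l]) @ s"
      by simp
    with assms(1) have "all_positive (stack (p @ [l]))"
      unfolding positive_prefixes_def by blast
    with \<open>stack p = []\<close> show "snd l"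
      by (simp add: push_def all_positive_def)
  qed
  ultimately show "is_minimum w g"
    unfolding is_minimum_iff_stack by (metis append_Nil stack_Nil)
qed

lemma prefix_with_negative_top_if_not_positive_prefixes:
  "\<not> positive_prefixes w \<Longrightarrow> \<exists>p s. w = p @ s \<and> stack p \<noteq> [] \<and> \<not> snd (hd (stack p))"
proof (induction w rule: rev_induct)
  case (snoc l p)
  show ?case
  proof (cases "positive_prefixes p")
    case False
    with snoc.IH show ?thesis
      by (metis append_assoc)
  next
    case True
    with snoc.prems have "all_positive (stack p)" "\<not> all_positive (push l (stack p))"
      by (simp_all add: positive_prefixes_snoc all_positive_stack_if_positive_prefixes)
    then have "push l (stack p) \<noteq> [] \<and> \<not> snd (hd (push l (stack p)))"
      by (cases "stack p") (auto simp: push_def all_positive_def split: if_splits)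
    then show ?thesis
      by (intro exI[of _ "p @ [l]"] exI[of _ "[]"]) simp
  qed
qed simp

lemma positive_prefixes_if_minima_trivial:
  assumes "\<And>g. is_minimum w g \<Longrightarrow> stack g = []"
  shows "positive_prefixes w"
proof (rule ccontr)
  define negative_top where
    "negative_top q \<longleftrightarrow> (\<exists>s. w = q @ s) \<and> stack q \<noteq> [] \<and> \<not> snd (hd (stack q))" for q
  assume "\<not> positive_prefixes w"
  then obtain q0 where "negative_top q0"
    using prefix_with_negative_top_if_not_positive_prefixes negative_top_def by blast
  moreover have "length (stack q) < Suc (length w)" if "negative_top q" for q
    using that length_stack[of q] by (auto simp: negative_top_def)
  ultimately obtain q where q: "negative_top q"
    and longest: "\<And>q'. negative_top q' \<Longrightarrow> length (stack q') \<le> length (stack q)"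
    using ex_has_greatest_nat[of negative_top q0 "\<lambda>q. length (stack q)"] by blast
  have "is_minimum w q"
    unfolding is_minimum_iff_stack
  proof (intro conjI allI impI)
    show "\<exists>p s. w = p @ s \<and> stack p = stack q"
      using q by (auto simp: negative_top_def)
  next
    fix p l s
    assume ps: "w = p @ l # s \<and> stack p = stack q"
    show "snd l"
    proof (rule ccontr)
      assume "\<not> snd l"
      with ps q have "stack (p @ [l]) = l # stack q"
        by (cases "stack q") (auto simp: negative_top_def push_def letter_inv_def)
      with ps \<open>\<not> snd l\<close> have "negative_top (p @ [l])"
        by (simp add: negative_top_def)
      with longest[of "p @ [l]"] \<open>stack (p @ [l]) = l # stack q\<close> show False
        by simp
    qed
  qed
  with assms q show False
    by (simp add: negative_top_def)
qed

theorem proposition4p8: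
  fixes X :: "'a set" and w :: "'a letter list"
  assumes "finite X"
    and "w \<in> words X"
    and "fg_eq w []"
  shows "(pc_is_identity X w \<longleftrightarrow>
            (\<forall>p s. w = p @ s \<longrightarrow> fg_positive X p \<or> fg_eq p []))
       \<and> (pc_is_identity X w \<longleftrightarrow>
            (\<forall>g. is_minimum w g \<longleftrightarrow> fg_eq g []))"
proof -
  have trivial: "stack w = []"
    using assms(3) by (simp add: fg_eq_iff_stack_eq)
  then have "pc_is_identity X w \<longleftrightarrow> positive_prefixes w"
    by (rule pc_is_identity_iff_positive_prefixes)
  moreover have "positive_prefixes w \<longleftrightarrow>
      (\<forall>p s. w = p @ s \<longrightarrow> fg_positive X p \<or> fg_eq p [])"
    using assms(2) by (rule positive_prefixes_iff)
  moreover have "positive_prefixes w \<longleftrightarrow> (\<forall>g. is_minimum w g \<longleftrightarrow> fg_eq g [])"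
    using is_minimum_iff_trivial_if_positive_prefixes[OF _ trivial]
      positive_prefixes_if_minima_trivial
    by (auto simp: fg_eq_iff_stack_eq)
  ultimately show ?thesis
    by blast
qed

end
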